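(* For every partition $\mu$ (viewed as a weak composition of length $n$ by appending zeros), $\mathrm{PR}1(\mu)=\mathrm{PR}2(\mathrm{inc}(\mu))$, where \[ \mathrm{PR}1(\mu)=\prod_{s\in\mathrm{dg}(\mu)}(1-q^{\mathrm{leg}(s)}t^{\mathrm{arm}(s)+1}),\qquad \mathrm{PR}2(\alpha)=\prod_{i\ge1}(t;t)_{m_i}\prod_{\substack{s\in\mathrm{dg}(\mathrm{inc}(\alpha))\\ s\text{ not in row }1}}(1-q^{\mathrm{leg}(s)+1}t^{\mathrm{arm}(s)+1}), \] $m_i$ is the number of parts of $\alpha$ equal to $i$, and $(t;t)_k=(1-t)(1-t^2)\cdots(1-t^k)$.
   Context: For a weak composition $\alpha=(\alpha_1,\dots,\alpha_n)$ (nonnegative integers), $\mathrm{dg}(\alpha)$ is the set of cells $(i,r)$, $1\le i\le n$, $1\le r\le\alpha_i$ (column $i$ from the left has $\alpha_i$ cells; rows counted from the bottom). $\mathrm{leg}(i,r)=\alpha_i-r$. $\mathrm{arm}(i,r)$ is the number of cells $(j,r)\in\mathrm{dg}(\alpha)$ with $j>i$ and $\alpha_j\le\alpha_i$, plus the number of cells $(j,r-1)\in\mathrm{dg}(\alpha)$ with $j<i$ and $\alpha_j<\alpha_i$. $\mathrm{inc}(\alpha)$ is the rearrangement of $\alpha$ into weakly increasing order. *)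

theory Defs
  imports Main
begin

text \<open>A weak composition is a list of naturals; column i (0-indexed here, i.e. column i+1
  of the paper) has height alpha!i. Cells are pairs (i, r) with r the row, counted from 1.\<close>

definition dg :: "nat list \<Rightarrow> (nat \<times> nat) set" where
  "dg \<alpha> = {(i, r). i < length \<alpha> \<and> 1 \<le> r \<and> r \<le> \<alpha> ! i}"

definition leg :: "nat list \<Rightarrow> nat \<times> nat \<Rightarrow> nat" where
  "leg \<alpha> s = \<alpha> ! fst s - snd s"

definition arm :: "nat list \<Rightarrow> nat \<times> nat \<Rightarrow> nat" where
  "arm \<alpha> s = (case s of (i, r) \<Rightarrow>
      card {j. (j, r) \<in> dg \<alpha> \<and> i < j \<and> \<alpha> ! j \<le> \<alpha> ! i}
    + card {j. r \<ge> 1 \<and> (j, r - 1) \<in> dg \<alpha> \<and> j < i \<and> \<alpha> ! j < \<alpha> ! i})"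

definition inc :: "nat list \<Rightarrow> nat list" where
  "inc \<alpha> = sort \<alpha>"

definition tpoch :: "'a::comm_ring_1 \<Rightarrow> nat \<Rightarrow> 'a" where
  "tpoch t k = (\<Prod>j = 1..k. 1 - t ^ j)"

definition PR1 :: "'a::comm_ring_1 \<Rightarrow> 'a \<Rightarrow> nat list \<Rightarrow> 'a" where
  "PR1 q t \<mu> = (\<Prod>s\<in>dg \<mu>. 1 - q ^ leg \<mu> s * t ^ (arm \<mu> s + 1))"

definition PR2 :: "'a::comm_ring_1 \<Rightarrow> 'a \<Rightarrow> nat list \<Rightarrow> 'a" where
  "PR2 q t \<alpha> =
     (\<Prod>i\<in>{i. 1 \<le> i \<and> i \<in> set \<alpha>}. tpoch t (count_list \<alpha> i))
   * (\<Prod>s\<in>{s \<in> dg (inc \<alpha>). snd s \<noteq> 1}.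
        1 - q ^ (leg (inc \<alpha>) s + 1) * t ^ (arm (inc \<alpha>) s + 1))"

end

theory Submission
  imports Defs "HOL-Library.Multiset"
begin

text \<open>For a partition \<mu> the arm of a cell (i, r) is the number of later columns of the same
  height plus the number of columns whose height lies in [r, \<mu>_i); for the increasing
  rearrangement and r \<ge> 2 it is the same expression with r - 1 in place of r. Hence the cell
  (i, r), r < \<mu>_i, of \<mu> and the cell (i, r + 1) of inc \<mu> contribute the same factor, once both
  are indexed by the column height h and the number d of later columns of height h; this
  indexing is invariant under permuting the columns. The remaining top cells of \<mu> contribute
  1 - t^(d+1), and grouping them by height gives the factors (t;t)_(m_h).\<close>

definition parts_between :: "nat list \<Rightarrow> nat \<Rightarrow> nat \<Rightarrow> nat" where
  "parts_between xs r h = length (filter (\<lambda>x. r \<le> x \<and> x < h) xs)"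

definition later_equal :: "nat list \<Rightarrow> nat \<Rightarrow> nat" where
  "later_equal xs i = card {j. i < j \<and> j < length xs \<and> xs ! j = xs ! i}"

lemma parts_between_conv_card:
  "parts_between xs r h = card {j. j < length xs \<and> r \<le> xs ! j \<and> xs ! j < h}"
  unfolding parts_between_def by (simp add: length_filter_conv_card)

lemma parts_between_mset_eq: "mset xs = mset ys \<Longrightarrow> parts_between xs = parts_between ys"
  unfolding parts_between_def by (metis mset_filter size_mset)

lemma later_equal_Cons_Suc: "i < length xs \<Longrightarrow> later_equal (a # xs) (Suc i) = later_equal xs i"
proof -
  have "{j. Suc i < j \<and> j < length (a # xs) \<and> (a # xs) ! j = (a # xs) ! Suc i}
        = Suc ` {j. i < j \<and> j < length xs \<and> xs ! j = xs ! i}"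
    by (auto simp: image_iff gr0_conv_Suc less_Suc_eq_0_disj)
  then show ?thesis unfolding later_equal_def by (simp add: card_image)
qed

lemma later_equal_Cons_0: "later_equal (a # xs) 0 = count_list xs a"
proof -
  have "{j. 0 < j \<and> j < length (a # xs) \<and> (a # xs) ! j = (a # xs) ! 0}
        = Suc ` {j. j < length xs \<and> xs ! j = a}"
    by (auto simp: image_iff gr0_conv_Suc)
  then have "later_equal (a # xs) 0 = card {j. j < length xs \<and> xs ! j = a}"
    unfolding later_equal_def by (simp add: card_image)
  also have "\<dots> = count_list xs a"
    unfolding count_list_eq_length_filter length_filter_conv_card by (simp add: eq_commute)
  finally show ?thesis .
qed

text \<open>The i-th entry of xs is the (later_equal xs i + 1)-th occurrence of its value counted
  from the right, so the pairs (xs ! i, later_equal xs i) run over all (h, d) with d below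
  the multiplicity of h.\<close>

lemma prod_nth_later_equal:
  fixes g :: "nat \<Rightarrow> nat \<Rightarrow> 'a::comm_monoid_mult"
  assumes "finite S" "set xs \<subseteq> S"
  shows "(\<Prod>i<length xs. g (xs ! i) (later_equal xs i)) = (\<Prod>h\<in>S. \<Prod>d<count_list xs h. g h d)"
  using assms(2)
proof (induction xs)
  case Nil
  then show ?case by simp
next
  case (Cons a xs)
  then have "a \<in> S" by simp
  have "(\<Prod>i<length (a # xs). g ((a # xs) ! i) (later_equal (a # xs) i))
      = g a (count_list xs a) * (\<Prod>i<length xs. g (xs ! i) (later_equal xs i))"
    by (simp add: prod.lessThan_Suc_shift later_equal_Cons_0 later_equal_Cons_Suc
        del: prod.lessThan_Suc)
  also have "\<dots> = g a (count_list xs a) * (\<Prod>h\<in>S. \<Prod>d<count_list xs h. g h d)"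
    using Cons by simp
  also have "\<dots> = (\<Prod>h\<in>S. (if h = a then g a (count_list xs a) else 1) * (\<Prod>d<count_list xs h. g h d))"
    by (simp add: prod.distrib assms(1) \<open>a \<in> S\<close>)
  also have "\<dots> = (\<Prod>h\<in>S. \<Prod>d<count_list (a # xs) h. g h d)"
    by (rule prod.cong) (auto simp: mult.commute)
  finally show ?case .
qed

lemma prod_nth_later_equal_mset_eq:
  fixes g :: "nat \<Rightarrow> nat \<Rightarrow> 'a::comm_monoid_mult"
  assumes "mset xs = mset ys"
  shows "(\<Prod>i<length xs. g (xs ! i) (later_equal xs i)) = (\<Prod>i<length ys. g (ys ! i) (later_equal ys i))"
proof -
  have "set xs = set ys" and "count_list xs = count_list ys"
    using assms by (metis set_mset_mset, intro ext mset_eq_length_filter)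
  then show ?thesis
    using prod_nth_later_equal[of "set xs" xs g] prod_nth_later_equal[of "set xs" ys g] by simp
qed

lemma tpoch_conv_prod_lessThan: "tpoch t k = (\<Prod>d<k. 1 - t ^ (d + 1))"
  unfolding tpoch_def
  by (rule prod.reindex_cong[where l = Suc]) (simp_all add: image_Suc_lessThan)

lemma prod_tpoch_count_list:
  fixes t :: "'a::comm_ring_1"
  shows "(\<Prod>i<length xs. if 1 \<le> xs ! i then 1 - t ^ (later_equal xs i + 1) else 1)
       = (\<Prod>h\<in>{h. 1 \<le> h \<and> h \<in> set xs}. tpoch t (count_list xs h))"
proof -
  have "(\<Prod>i<length xs. if 1 \<le> xs ! i then 1 - t ^ (later_equal xs i + 1) else 1)
      = (\<Prod>h\<in>set xs. \<Prod>d<count_list xs h. if 1 \<le> h then 1 - t ^ (d + 1) else 1)"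
    using prod_nth_later_equal[of "set xs" xs] by simp
  also have "\<dots> = (\<Prod>h\<in>set xs. if 1 \<le> h then tpoch t (count_list xs h) else 1)"
    by (intro prod.cong refl) (auto simp: tpoch_conv_prod_lessThan)
  also have "\<dots> = (\<Prod>h\<in>{h \<in> set xs. 1 \<le> h}. tpoch t (count_list xs h))"
    by (simp add: prod.inter_filter)
  finally show ?thesis by (simp add: conj_commute)
qed

lemma dg_eq_Sigma: "dg \<alpha> = (SIGMA i:{..<length \<alpha>}. {1..\<alpha> ! i})"
  unfolding dg_def by auto

lemma arm_partition:
  assumes "sorted_wrt (\<ge>) \<mu>" and "i < length \<mu>" and "1 \<le> r" "r \<le> \<mu> ! i"
  shows "arm \<mu> (i, r) = later_equal \<mu> i + parts_between \<mu> r (\<mu> ! i)"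
proof -
  have strict_mono: "\<mu> ! b \<le> \<mu> ! a" if "a < b" "b < length \<mu>" for a b
    using assms(1) that sorted_wrt_nth_less by fastforce
  then have mono: "\<mu> ! b \<le> \<mu> ! a" if "a \<le> b" "b < length \<mu>" for a b
    using that by (metis order.refl le_neq_implies_less)
  have same_row: "{j. (j, r) \<in> dg \<mu> \<and> i < j \<and> \<mu> ! j \<le> \<mu> ! i}
      = {j. i < j \<and> j < length \<mu> \<and> \<mu> ! j = \<mu> ! i}
        \<union> {j. j < length \<mu> \<and> r \<le> \<mu> ! j \<and> \<mu> ! j < \<mu> ! i}"
    using assms(2-4) strict_mono mono by (auto simp: dg_def) (metis le_less_trans less_le not_le)+
  have row_below: "{j. r \<ge> 1 \<and> (j, r - 1) \<in> dg \<mu> \<and> j < i \<and> \<mu> ! j < \<mu> ! i} = {}"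
    using assms(2) strict_mono by (auto simp: dg_def) (meson less_trans not_le)
  have "card ({j. i < j \<and> j < length \<mu> \<and> \<mu> ! j = \<mu> ! i}
        \<union> {j. j < length \<mu> \<and> r \<le> \<mu> ! j \<and> \<mu> ! j < \<mu> ! i})
     = later_equal \<mu> i + parts_between \<mu> r (\<mu> ! i)"
    unfolding later_equal_def parts_between_conv_card by (rule card_Un_disjoint) auto
  then show ?thesis unfolding arm_def using same_row row_below by simp
qed

lemma arm_sorted:
  assumes "sorted b" and "i < length b" and "2 \<le> r" "r \<le> b ! i"
  shows "arm b (i, r) = later_equal b i + parts_between b (r - 1) (b ! i)"
proof -
  have mono: "b ! a \<le> b ! c" if "a \<le> c" "c < length b" for a c
    using assms(1) that by (simp add: sorted_nth_mono)
  have same_row: "{j. (j, r) \<in> dg b \<and> i < j \<and> b ! j \<le> b ! i}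
      = {j. i < j \<and> j < length b \<and> b ! j = b ! i}"
    using assms(2-4) mono by (auto simp: dg_def) (metis le_antisym less_imp_le)
  have row_below: "{j. r \<ge> 1 \<and> (j, r - 1) \<in> dg b \<and> j < i \<and> b ! j < b ! i}
     = {j. j < length b \<and> r - 1 \<le> b ! j \<and> b ! j < b ! i}"
    using assms(2-4) mono by (auto simp: dg_def) (meson leI order.strict_iff_not)
  have "arm b (i, r) = card {j. (j, r) \<in> dg b \<and> i < j \<and> b ! j \<le> b ! i}
     + card {j. r \<ge> 1 \<and> (j, r - 1) \<in> dg b \<and> j < i \<and> b ! j < b ! i}"
    unfolding arm_def by simp
  then show ?thesis unfolding same_row row_below later_equal_def parts_between_conv_card .
qed

text \<open>Contribution of the non-top cells of a column of height h followed by d columns of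
  the same height.\<close>

definition column_factor :: "'a::comm_ring_1 \<Rightarrow> 'a \<Rightarrow> nat list \<Rightarrow> nat \<Rightarrow> nat \<Rightarrow> 'a" where
  "column_factor q t xs h d = (\<Prod>r\<in>{1..<h}. 1 - q ^ (h - r) * t ^ (d + parts_between xs r h + 1))"

lemma PR1_partition:
  fixes q t :: "'a::comm_ring_1"
  assumes "sorted_wrt (\<ge>) \<mu>"
  shows "PR1 q t \<mu> = (\<Prod>i<length \<mu>. (if 1 \<le> \<mu> ! i then 1 - t ^ (later_equal \<mu> i + 1) else 1)
                                     * column_factor q t \<mu> (\<mu> ! i) (later_equal \<mu> i))"
proof -
  have column: "(\<Prod>r\<in>{1..h}. 1 - q ^ (h - r) * t ^ (d + parts_between \<mu> r h + 1))
      = (if 1 \<le> h then 1 - t ^ (d + 1) else 1) * column_factor q t \<mu> h d" for h d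
  proof (cases "h = 0")
    case False
    then have "{1..h} = insert h {1..<h}" by auto
    moreover have "parts_between \<mu> h h = 0" unfolding parts_between_def by simp
    ultimately show ?thesis using False by (simp add: column_factor_def)
  qed (simp add: column_factor_def)
  have "PR1 q t \<mu> = (\<Prod>i<length \<mu>. \<Prod>r\<in>{1..\<mu> ! i}. 1 - q ^ leg \<mu> (i, r) * t ^ (arm \<mu> (i, r) + 1))"
    unfolding PR1_def dg_eq_Sigma by (simp add: prod.Sigma)
  also have "\<dots> = (\<Prod>i<length \<mu>. \<Prod>r\<in>{1..\<mu> ! i}.
                      1 - q ^ (\<mu> ! i - r) * t ^ (later_equal \<mu> i + parts_between \<mu> r (\<mu> ! i) + 1))"
    by (intro prod.cong refl) (simp add: leg_def arm_partition[OF assms])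
  finally show ?thesis by (simp only: column)
qed

lemma prod_upper_rows_sorted:
  fixes q t :: "'a::comm_ring_1"
  assumes "sorted b"
  shows "(\<Prod>s\<in>{s \<in> dg b. snd s \<noteq> 1}. 1 - q ^ (leg b s + 1) * t ^ (arm b s + 1))
       = (\<Prod>i<length b. column_factor q t b (b ! i) (later_equal b i))"
proof -
  have "{s \<in> dg b. snd s \<noteq> 1} = (SIGMA i:{..<length b}. {2..b ! i})"
    unfolding dg_def by auto
  then have "(\<Prod>s\<in>{s \<in> dg b. snd s \<noteq> 1}. 1 - q ^ (leg b s + 1) * t ^ (arm b s + 1))
      = (\<Prod>i<length b. \<Prod>r\<in>{2..b ! i}. 1 - q ^ (leg b (i, r) + 1) * t ^ (arm b (i, r) + 1))"
    by (simp add: prod.Sigma)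
  also have "\<dots> = (\<Prod>i<length b. \<Prod>r\<in>{2..b ! i}.
      1 - q ^ (b ! i - (r - 1)) * t ^ (later_equal b i + parts_between b (r - 1) (b ! i) + 1))"
    by (intro prod.cong refl) (auto simp: leg_def arm_sorted[OF assms] Suc_diff_le)
  also have "\<dots> = (\<Prod>i<length b. column_factor q t b (b ! i) (later_equal b i))"
  proof (intro prod.cong refl)
    fix i
    have "{2..b ! i} = Suc ` {1..<b ! i}" by auto
    then show "(\<Prod>r\<in>{2..b ! i}.
        1 - q ^ (b ! i - (r - 1)) * t ^ (later_equal b i + parts_between b (r - 1) (b ! i) + 1))
        = column_factor q t b (b ! i) (later_equal b i)"
      unfolding column_factor_def by (intro prod.reindex_cong[where l = Suc]) simp_all
  qed
  finally show ?thesis .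
qed

theorem mainTheorem10:
  fixes q t :: "'a::comm_ring_1" and \<mu> :: "nat list"
  assumes "sorted_wrt (\<ge>) \<mu>"
  shows "PR1 q t \<mu> = PR2 q t (inc \<mu>)"
proof -
  define b where "b = inc \<mu>"
  have mset_b: "mset b = mset \<mu>" and "sorted b" and inc_b: "inc b = b"
    unfolding b_def inc_def by (simp_all add: sorted_sort_id)
  have "set b = set \<mu>" and "count_list b = count_list \<mu>"
    using mset_b by (metis set_mset_mset, intro ext mset_eq_length_filter)
  then have tops: "(\<Prod>i<length \<mu>. if 1 \<le> \<mu> ! i then 1 - t ^ (later_equal \<mu> i + 1) else 1)
      = (\<Prod>h\<in>{h. 1 \<le> h \<and> h \<in> set b}. tpoch t (count_list b h))"
    by (simp only: prod_tpoch_count_list)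
  have "(\<Prod>i<length \<mu>. column_factor q t \<mu> (\<mu> ! i) (later_equal \<mu> i))
      = (\<Prod>i<length b. column_factor q t b (b ! i) (later_equal b i))"
    using prod_nth_later_equal_mset_eq[OF mset_b[symmetric]]
    by (simp add: column_factor_def parts_between_mset_eq[OF mset_b])
  with tops show ?thesis
    unfolding PR1_partition[OF assms] PR2_def b_def[symmetric] inc_b
      prod_upper_rows_sorted[OF \<open>sorted b\<close>]
    by (simp add: prod.distrib)
qed

end
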